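(* Let $p,q$ be integers with $2\le q<p$ and $q\mid p$, and let $s=\frac{\log q}{\log p}$. There exist uncountably many regular mappings $\tau$ with $\max_{n\ge1}\ell_n<\infty$, giving pairwise distinct sets $\Lambda(\tau)$ (regular spectra of $\mu_{p,q}$), such that $D_s^+(\Lambda(\tau))>0$.
   Context: $\mu_{p,q}$ denotes the self-similar probability measure on $\mathbb R$ satisfying $\mu=\frac1q\sum_{d\in\mathcal D}\mu\circ f_d^{-1}$ with $f_d(x)=p^{-1}(x+d)$ and $\mathcal D=\frac pq\{0,1,\ldots,q-1\}$. Upper $r$-Beurling density: for a countable $\Lambda\subseteq\mathbb R$ and $r>0$, $D_r^+(\Lambda)=\limsup_{h\to\infty}\sup_{x\in\mathbb R}\frac{\#(\Lambda\cap B(x,h))}{h^r}$, where $B(x,h)=(x-h,x+h)$. Let $\Sigma_q=\{0,1,\ldots,q-1\}$, $\Sigma_q^n$ the words of length $n$, and $\Sigma_q^\ast=\bigcup_{n\ge1}\Sigma_q^n$. A map $\tau:\Sigma_q^\ast\to\{-1,0,\ldots,p-2\}$ is a regular mapping if (i) $\tau(0^n)=0$ for all $n\ge1$; (ii) $\tau(i_1\cdots i_n)\in i_n+q\mathbb Z$ for every word $i_1\cdots i_n$; (iii) for every $I\in\Sigma_q^\ast$, $\tau(I0^l)=0$ for all sufficiently large $l$. For each $n\ge1$ write $n=i_1+i_2q+\cdots+i_Nq^{N-1}$ with $i_N\ne0$ and $I=i_1\cdots i_N$. Set $\lambda_0=0$ and $\lambda_n=\tau(I|_1)+\tau(I|_2)p+\cdots+\tau(I|_N)p^{N-1}+\sum_{k=N}^\infty\tau(I0^{k-N+1})p^k$,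 where $I|_j=i_1\cdots i_j$; let $\Lambda(\tau)=\{\lambda_n\}_{n\ge0}$ and $\ell_n=\#\{k\ge1:\tau(I0^k)\ne0\}$. A regular spectrum is a set $\Lambda(\tau)$ with $\tau$ regular and $\max_{n\ge1}\ell_n<\infty$; by a known result (Dai–He–Lai) such sets are spectra of $\mu_{p,q}$, i.e. $\{e^{2\pi i\lambda x}\}_{\lambda\in\Lambda(\tau)}$ is an orthonormal basis of $L^2(\mu_{p,q})$. *)

theory Defs
  imports "HOL-Analysis.Analysis"
begin

text \<open>Base-q digits of n, least significant first: n = i_1 + i_2 q + ... + i_N q^(N-1),
  with i_N \<noteq> 0 when n > 0.  Words i_1 ... i_n are lists [i_1, ..., i_n].\<close>
fun digits :: "nat \<Rightarrow> nat \<Rightarrow> nat list" where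
  "digits q n = (if n = 0 \<or> q < 2 then [] else n mod q # digits q (n div q))"

definition words :: "nat \<Rightarrow> nat list set" where
  "words q = {I. I \<noteq> [] \<and> (\<forall>i\<in>set I. i < q)}"

definition regular_mapping :: "nat \<Rightarrow> nat \<Rightarrow> (nat list \<Rightarrow> int) \<Rightarrow> bool" where
  "regular_mapping p q \<tau> \<longleftrightarrow>
     (\<forall>I\<in>words q. \<tau> I \<in> {-1 .. int p - 2}) \<and>
     (\<forall>n\<ge>1. \<tau> (replicate n 0) = 0) \<and>
     (\<forall>I\<in>words q. \<tau> I mod int q = int (last I) mod int q) \<and>
     (\<forall>I\<in>words q. \<exists>L. \<forall>l\<ge>L. \<tau> (I @ replicate l 0) = 0)"

text \<open>\<lambda>_n; the infinite series is eventually zero for a regular mapping.\<close>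
definition lam :: "nat \<Rightarrow> nat \<Rightarrow> (nat list \<Rightarrow> int) \<Rightarrow> nat \<Rightarrow> real" where
  "lam p q \<tau> n =
     (if n = 0 then 0 else
      (let I = digits q n; N = length I in
        (\<Sum>j<N. real_of_int (\<tau> (take (Suc j) I)) * real p ^ j)
        + (\<Sum>k. real_of_int (\<tau> (I @ replicate (Suc k) 0)) * real p ^ (N + k))))"

definition Lambda :: "nat \<Rightarrow> nat \<Rightarrow> (nat list \<Rightarrow> int) \<Rightarrow> real set" where
  "Lambda p q \<tau> = range (lam p q \<tau>)"

definition ell :: "nat \<Rightarrow> (nat list \<Rightarrow> int) \<Rightarrow> nat \<Rightarrow> nat" where
  "ell q \<tau> n = card {k::nat. k \<ge> 1 \<and> \<tau> (digits q n @ replicate k 0) \<noteq> 0}"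

definition regular_spectrum_map :: "nat \<Rightarrow> nat \<Rightarrow> (nat list \<Rightarrow> int) \<Rightarrow> bool" where
  "regular_spectrum_map p q \<tau> \<longleftrightarrow> regular_mapping p q \<tau> \<and> (\<exists>B. \<forall>n\<ge>1. ell q \<tau> n \<le> B)"

definition upper_beurling_density :: "real \<Rightarrow> real set \<Rightarrow> ereal" where
  "upper_beurling_density r \<Lambda> =
     Limsup at_top (\<lambda>h::real. SUP x::real. ereal (real (card (\<Lambda> \<inter> ball x h)) / h powr r))"

end

theory Submission
  imports Defs
begin

text \<open>For \<open>A \<subseteq> \<nat>\<close> let \<open>\<tau>\<^sub>A\<close> send a word of length \<open>i + 1\<close> to its last digit \<open>d\<close>, except that
  \<open>d = q - 1\<close> becomes \<open>-1\<close> when \<open>i \<in> A\<close>. Then \<open>\<tau>\<^sub>A(I0\<^sup>k) = 0\<close>, so all \<open>\<ell>\<^sub>n\<close> vanish, and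
  \<open>\<lambda>\<^sub>n\<close> is the base-\<open>p\<close> number whose digits are the base-\<open>q\<close> digits of \<open>n\<close>, each \<open>q - 1\<close> at a
  position in \<open>A\<close> replaced by \<open>-1\<close>. These digits lie in \<open>{-1, \<dots>, q - 1}\<close>, so any two differ by less than \<open>p\<close>,
  and base-\<open>p\<close> expansions with such digits are unique. Hence \<open>n \<mapsto> \<lambda>\<^sub>n\<close> is injective and
  \<open>-p\<^sup>j \<in> \<Lambda>(\<tau>\<^sub>A)\<close> iff \<open>j \<in> A\<close>, so \<open>A \<mapsto> \<Lambda>(\<tau>\<^sub>A)\<close> is injective on the uncountably many
  \<open>A \<subseteq> \<nat>\<close>. Finally the \<open>q\<^sup>N\<close> points \<open>\<lambda>\<^sub>n\<close>, \<open>n < q\<^sup>N\<close>, lie in \<open>(-p\<^sup>N, p\<^sup>N)\<close> and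
  \<open>(p\<^sup>N)\<^sup>s = q\<^sup>N\<close>, which gives density at least \<open>1/q\<close>.\<close>

declare digits.simps[simp del]

lemma digits_0[simp]: "digits q 0 = []"
  by (simp add: digits.simps)

lemma digits_eq_Cons: "2 \<le> q \<Longrightarrow> 0 < n \<Longrightarrow> digits q n = n mod q # digits q (n div q)"
  by (simp add: digits.simps)

lemma digits_eq_Nil_iff: "2 \<le> q \<Longrightarrow> digits q n = [] \<longleftrightarrow> n = 0"
  by (cases "n = 0") (simp_all add: digits_eq_Cons)

lemma digits_less: "2 \<le> q \<Longrightarrow> d \<in> set (digits q n) \<Longrightarrow> d < q"
proof (induction q n rule: digits.induct)
  case (1 q n)
  then show ?case
    by (cases "n = 0") (auto simp: digits_eq_Cons)
qed

lemma last_digits_nonzero: "2 \<le> q \<Longrightarrow> digits q n \<noteq> [] \<Longrightarrow> last (digits q n) \<noteq> 0"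
proof (induction q n rule: digits.induct)
  case (1 q n)
  then have "0 < n" by (auto simp: digits_eq_Nil_iff)
  show ?case
  proof (cases "n div q = 0")
    case True
    with \<open>2 \<le> q\<close> have "n mod q = n" by (simp add: div_eq_0_iff)
    with True \<open>0 < n\<close> \<open>2 \<le> q\<close> show ?thesis by (simp add: digits_eq_Cons)
  next
    case False
    with 1 \<open>0 < n\<close> show ?thesis by (simp add: digits_eq_Cons digits_eq_Nil_iff)
  qed
qed

lemma digits_inj: "2 \<le> q \<Longrightarrow> inj (digits q)"
proof (rule injI)
  fix n m assume "2 \<le> q" and "digits q n = digits q m"
  then show "n = m"
  proof (induction n arbitrary: m rule: less_induct)
    case (less n)
    show ?case
    proof (cases "n = 0")
      case True
      with less.prems show ?thesis by (metis digits_eq_Nil_iff)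
    next
      case False
      with less.prems have "0 < m" by (metis digits_eq_Nil_iff gr0I)
      with False less.prems have "n mod q = m mod q" "digits q (n div q) = digits q (m div q)"
        by (auto simp: digits_eq_Cons)
      moreover from False less.prems have "n div q < n" by simp
      ultimately show ?thesis
        using less.IH less.prems(1) by (metis div_mult_mod_eq)
    qed
  qed
qed

lemma length_digits_le: "2 \<le> q \<Longrightarrow> n < q ^ N \<Longrightarrow> length (digits q n) \<le> N"
proof (induction N arbitrary: n)
  case (Suc N)
  then have "n div q < q ^ N"
    by (simp add: div_less_iff_less_mult mult.commute)
  with Suc show ?case
    by (cases "n = 0") (simp_all add: digits_eq_Cons)
qed simp

lemma digits_mult_power: "2 \<le> q \<Longrightarrow> 0 < d \<Longrightarrow> d < q \<Longrightarrow> digits q (d * q ^ j) = replicate j 0 @ [d]"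
  by (induction j) (simp_all add: digits_eq_Cons)

lemma power_expansion_unique:
  fixes c d :: "nat \<Rightarrow> int"
  assumes "\<forall>i<N. \<bar>c i - d i\<bar> < P"
    and "(\<Sum>i<N. c i * P ^ i) = (\<Sum>i<N. d i * P ^ i)"
  shows "\<forall>i<N. c i = d i"
  using assms
proof (induction N arbitrary: c d)
  case (Suc N)
  have split: "c 0 - d 0 = P * ((\<Sum>i<N. d (Suc i) * P ^ i) - (\<Sum>i<N. c (Suc i) * P ^ i))"
    using Suc.prems(2) unfolding sum.lessThan_Suc_shift
    by (simp add: sum_distrib_left algebra_simps)
  then have "P dvd c 0 - d 0" by simp
  have small: "\<bar>c 0 - d 0\<bar> < P" using Suc.prems(1) by simp
  have c0: "c 0 = d 0"
  proof (rule ccontr)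
    assume "c 0 \<noteq> d 0"
    with \<open>P dvd c 0 - d 0\<close> have "\<bar>P\<bar> \<le> \<bar>c 0 - d 0\<bar>" by (intro dvd_imp_le_int) simp
    with small show False using abs_ge_self[of P] by linarith
  qed
  moreover from small have "P \<noteq> 0" using abs_ge_zero[of "c 0 - d 0"] by linarith
  ultimately have "(\<Sum>i<N. c (Suc i) * P ^ i) = (\<Sum>i<N. d (Suc i) * P ^ i)"
    using split by simp
  with Suc.prems(1) have "\<forall>i<N. c (Suc i) = d (Suc i)"
    by (intro Suc.IH) auto
  with c0 show ?case by (auto simp: less_Suc_eq_0_disj)
qed simp

lemma abs_power_expansion_le:
  fixes c :: "nat \<Rightarrow> int"
  assumes "1 \<le> P" and "\<forall>i<N. \<bar>c i\<bar> \<le> P - 1"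
  shows "\<bar>\<Sum>i<N. c i * P ^ i\<bar> \<le> P ^ N - 1"
  using assms(2)
proof (induction N)
  case (Suc N)
  have "\<bar>c N * P ^ N\<bar> \<le> (P - 1) * P ^ N"
    using Suc.prems assms(1) by (simp add: abs_mult mult_right_mono)
  with Suc have "\<bar>(\<Sum>i<N. c i * P ^ i) + c N * P ^ N\<bar> \<le> (P ^ N - 1) + (P - 1) * P ^ N"
    by (smt (verit, best) less_Suc_eq)
  then show ?case by (simp add: algebra_simps)
qed simp

definition signed_digit :: "nat \<Rightarrow> nat set \<Rightarrow> nat \<Rightarrow> nat \<Rightarrow> int" where
  "signed_digit q A i d = (if d = q - 1 \<and> i \<in> A then -1 else int d)"

definition tau_of_set :: "nat \<Rightarrow> nat set \<Rightarrow> nat list \<Rightarrow> int" where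
  "tau_of_set q A I = (if I = [] then 0 else signed_digit q A (length I - 1) (last I))"

definition signed_digits :: "nat \<Rightarrow> nat set \<Rightarrow> nat list \<Rightarrow> nat \<Rightarrow> int" where
  "signed_digits q A I i = (if i < length I then signed_digit q A i (I ! i) else 0)"

lemma signed_digit_eq_0_iff: "2 \<le> q \<Longrightarrow> signed_digit q A i d = 0 \<longleftrightarrow> d = 0"
  by (simp add: signed_digit_def)

lemma signed_digit_inj: "2 \<le> q \<Longrightarrow> signed_digit q A i d = signed_digit q A i e \<Longrightarrow> d = e"
  by (auto simp: signed_digit_def split: if_splits)

lemma signed_digits_bounds:
  assumes "2 \<le> q" and "\<forall>d\<in>set I. d < q"
  shows "-1 \<le> signed_digits q A I i \<and> signed_digits q A I i \<le> int q - 1"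
proof (cases "i < length I")
  case True
  with assms(2) have "I ! i < q" by simp
  with assms(1) show ?thesis by (auto simp: signed_digits_def signed_digit_def)
qed (use assms(1) in \<open>simp add: signed_digits_def\<close>)

lemma signed_digits_eq_minus_1_iff:
  "2 \<le> q \<Longrightarrow> signed_digits q A I i = -1 \<longleftrightarrow> i < length I \<and> I ! i = q - 1 \<and> i \<in> A"
  by (auto simp: signed_digits_def signed_digit_def)

lemma signed_digits_inj:
  assumes "2 \<le> q" and "signed_digits q A I = signed_digits q A J"
    and "I \<noteq> [] \<Longrightarrow> last I \<noteq> 0" and "J \<noteq> [] \<Longrightarrow> last J \<noteq> 0"
  shows "I = J"
proof -
  have nonzero: "signed_digits q A K i \<noteq> 0 \<longleftrightarrow> i < length K \<and> K ! i \<noteq> 0" for K i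
    using signed_digit_eq_0_iff[OF assms(1)] by (simp add: signed_digits_def)
  have length_le: "length K \<le> length K'"
    if eq: "signed_digits q A K = signed_digits q A K'" and last: "K \<noteq> [] \<Longrightarrow> last K \<noteq> 0" for K K'
  proof (rule ccontr)
    assume "\<not> length K \<le> length K'"
    then have "K \<noteq> []" and "length K' \<le> length K - 1" by auto
    then have "signed_digits q A K (length K - 1) \<noteq> 0"
      using last nonzero by (simp add: last_conv_nth)
    moreover have "signed_digits q A K' (length K - 1) = 0"
      using \<open>length K' \<le> length K - 1\<close> by (simp add: signed_digits_def)
    ultimately show False using eq by simp
  qed
  have "length I = length J"
    using assms by (intro antisym length_le) simp_all
  moreover have "I ! i = J ! i" if "i < length I" for i
    using fun_cong[OF assms(2), of i] that \<open>length I = length J\<close> signed_digit_inj[OF assms(1)]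
    by (simp add: signed_digits_def)
  ultimately show ?thesis by (rule nth_equalityI)
qed

lemma regular_spectrum_map_tau_of_set:
  assumes "2 \<le> q" and "q < p"
  shows "regular_spectrum_map p q (tau_of_set q A)"
proof -
  have "regular_mapping p q (tau_of_set q A)"
    unfolding regular_mapping_def
  proof (intro conjI ballI allI impI)
    fix I assume "I \<in> words q"
    then have "I \<noteq> []" and "last I < q"
      by (auto simp: words_def)
    moreover have "(-1::int) mod int q = int q - 1"
      using assms by (simp add: zmod_minus1)
    ultimately show "tau_of_set q A I \<in> {-1 .. int p - 2}"
      and "tau_of_set q A I mod int q = int (last I) mod int q"
      and "\<exists>L. \<forall>l\<ge>L. tau_of_set q A (I @ replicate l 0) = 0"
      using assms by (auto simp: tau_of_set_def signed_digit_def of_nat_diff intro!: exI[of _ 1])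
  qed (use assms in \<open>simp add: tau_of_set_def signed_digit_def\<close>)
  moreover have "ell q (tau_of_set q A) n = 0" for n
  proof -
    have "tau_of_set q A (digits q n @ replicate k 0) = 0" if "1 \<le> k" for k
      using that assms(1) by (cases k) (simp_all add: tau_of_set_def signed_digit_def)
    then have "{k::nat. k \<ge> 1 \<and> tau_of_set q A (digits q n @ replicate k 0) \<noteq> 0} = {}"
      by auto
    then show ?thesis by (simp only: ell_def card.empty)
  qed
  ultimately show ?thesis
    unfolding regular_spectrum_map_def by auto
qed

lemma lam_tau_of_set:
  assumes "2 \<le> q" and "length (digits q n) \<le> M"
  shows "lam p q (tau_of_set q A) n = of_int (\<Sum>i<M. signed_digits q A (digits q n) i * int p ^ i)"
proof (cases "n = 0")
  case False
  let ?I = "digits q n"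
  have tail: "tau_of_set q A (?I @ 0 # replicate k 0) = 0" for k
    using assms(1) by (simp add: tau_of_set_def signed_digit_def)
  have "tau_of_set q A (take (Suc i) ?I) = signed_digits q A ?I i" if "i < length ?I" for i
    using that by (simp add: tau_of_set_def signed_digits_def take_Suc_conv_app_nth)
  then have "lam p q (tau_of_set q A) n = (\<Sum>i<length ?I. of_int (signed_digits q A ?I i) * real p ^ i)"
    using False by (simp add: lam_def Let_def tail)
  also have "\<dots> = of_int (\<Sum>i<length ?I. signed_digits q A ?I i * int p ^ i)"
    by simp
  also have "(\<Sum>i<length ?I. signed_digits q A ?I i * int p ^ i)
      = (\<Sum>i<M. signed_digits q A ?I i * int p ^ i)"
    using assms(2) by (intro sum.mono_neutral_left) (auto simp: signed_digits_def)
  finally show ?thesis .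
qed (simp add: lam_def signed_digits_def)

lemma lam_tau_of_set_eq_iff:
  assumes "2 \<le> q" and "q < p"
  shows "lam p q (tau_of_set q A) n = lam p q (tau_of_set q B) m
    \<longleftrightarrow> signed_digits q A (digits q n) = signed_digits q B (digits q m)"
    (is "_ \<longleftrightarrow> ?c = ?d")
proof
  define M where "M = max (length (digits q n)) (length (digits q m))"
  assume "lam p q (tau_of_set q A) n = lam p q (tau_of_set q B) m"
  then have "real_of_int (\<Sum>i<M. ?c i * int p ^ i) = real_of_int (\<Sum>i<M. ?d i * int p ^ i)"
    using lam_tau_of_set[OF assms(1), of n M p A] lam_tau_of_set[OF assms(1), of m M p B]
    by (simp add: M_def)
  then have "(\<Sum>i<M. ?c i * int p ^ i) = (\<Sum>i<M. ?d i * int p ^ i)"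
    by (rule of_int_eq_iff[THEN iffD1])
  moreover have "\<forall>i<M. \<bar>?c i - ?d i\<bar> < int p"
  proof (intro allI impI)
    fix i
    have "-1 \<le> ?c i \<and> ?c i \<le> int q - 1" "-1 \<le> ?d i \<and> ?d i \<le> int q - 1"
      using signed_digits_bounds[OF assms(1)] digits_less[OF assms(1)] by blast+
    with assms(2) show "\<bar>?c i - ?d i\<bar> < int p" by (auto simp: abs_less_iff)
  qed
  ultimately have "\<forall>i<M. ?c i = ?d i"
    by (intro power_expansion_unique)
  moreover have "?c i = 0" "?d i = 0" if "M \<le> i" for i
    using that by (simp_all add: signed_digits_def M_def)
  ultimately show "?c = ?d" by (intro ext) (metis not_le)
next
  assume "?c = ?d"
  then show "lam p q (tau_of_set q A) n = lam p q (tau_of_set q B) m"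
    using lam_tau_of_set[OF assms(1), where M = "max (length (digits q n)) (length (digits q m))"]
    by simp
qed

lemma lam_tau_of_set_inj:
  assumes "2 \<le> q" and "q < p"
  shows "inj (lam p q (tau_of_set q A))"
proof (rule injI)
  fix n m assume "lam p q (tau_of_set q A) n = lam p q (tau_of_set q A) m"
  then have "digits q n = digits q m"
    using assms lam_tau_of_set_eq_iff signed_digits_inj last_digits_nonzero by metis
  then show "n = m" using digits_inj[OF assms(1)] by (simp add: inj_eq)
qed

lemma Lambda_tau_of_set_eq_imp_subset:
  assumes "2 \<le> q" and "q < p" and "Lambda p q (tau_of_set q A) = Lambda p q (tau_of_set q B)"
  shows "A \<subseteq> B"
proof
  fix j assume "j \<in> A"
  let ?R = "replicate j 0 @ [q - 1]"
  have "lam p q (tau_of_set q A) ((q - 1) * q ^ j) \<in> Lambda p q (tau_of_set q B)"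
    using assms(3) unfolding Lambda_def by (metis rangeI)
  then obtain n where "lam p q (tau_of_set q B) n = lam p q (tau_of_set q A) ((q - 1) * q ^ j)"
    by (auto simp: Lambda_def)
  then have "signed_digits q B (digits q n) = signed_digits q A ?R"
    using lam_tau_of_set_eq_iff[OF assms(1,2)] digits_mult_power[OF assms(1)] assms(1) by simp
  moreover have "signed_digits q A ?R j = -1"
    using \<open>j \<in> A\<close> assms(1) by (simp add: signed_digits_eq_minus_1_iff nth_append)
  ultimately show "j \<in> B"
    using signed_digits_eq_minus_1_iff[OF assms(1)] by metis
qed

lemma Lambda_tau_of_set_inj:
  assumes "2 \<le> q" and "q < p"
  shows "inj (\<lambda>A. Lambda p q (tau_of_set q A))"
  using Lambda_tau_of_set_eq_imp_subset[OF assms]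
  by (intro injI subset_antisym) simp_all

lemma abs_lam_tau_of_set_less:
  assumes "2 \<le> q" and "q < p" and "n < q ^ N"
  shows "\<bar>lam p q (tau_of_set q A) n\<bar> < real p ^ N"
proof -
  let ?c = "signed_digits q A (digits q n)"
  have "\<forall>i<N. \<bar>?c i\<bar> \<le> int p - 1"
  proof (intro allI impI)
    fix i
    have "-1 \<le> ?c i \<and> ?c i \<le> int q - 1"
      using signed_digits_bounds[OF assms(1)] digits_less[OF assms(1)] by blast
    with assms(1,2) show "\<bar>?c i\<bar> \<le> int p - 1" by (auto simp: abs_le_iff)
  qed
  then have "\<bar>\<Sum>i<N. ?c i * int p ^ i\<bar> \<le> int p ^ N - 1"
    using assms by (intro abs_power_expansion_le) simp_all
  then have "real_of_int \<bar>\<Sum>i<N. ?c i * int p ^ i\<bar> \<le> real_of_int (int p ^ N - 1)"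
    by (simp only: of_int_le_iff)
  then have "\<bar>lam p q (tau_of_set q A) n\<bar> \<le> real p ^ N - 1"
    using lam_tau_of_set[OF assms(1) length_digits_le[OF assms(1,3)]] by simp
  then show ?thesis by linarith
qed

lemma finite_Lambda_tau_of_set_Int_ball:
  assumes "2 \<le> q"
  shows "finite (Lambda p q (tau_of_set q A) \<inter> ball x r)"
proof (rule finite_subset)
  show "Lambda p q (tau_of_set q A) \<inter> ball x r \<subseteq> real_of_int ` {\<lfloor>x - r\<rfloor> .. \<lceil>x + r\<rceil>}"
  proof
    fix y assume y: "y \<in> Lambda p q (tau_of_set q A) \<inter> ball x r"
    then obtain n where "y = lam p q (tau_of_set q A) n"
      by (auto simp: Lambda_def)
    moreover have "lam p q (tau_of_set q A) n
        = of_int (\<Sum>i<length (digits q n). signed_digits q A (digits q n) i * int p ^ i)"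
      by (rule lam_tau_of_set[OF assms]) simp
    ultimately obtain k where k: "y = real_of_int k" by blast
    from y have "x - r < y" "y < x + r" by (auto simp: dist_real_def)
    with k have "\<lfloor>x - r\<rfloor> \<le> k" "k \<le> \<lceil>x + r\<rceil>" by linarith+
    with k show "y \<in> real_of_int ` {\<lfloor>x - r\<rfloor> .. \<lceil>x + r\<rceil>}" by auto
  qed
qed simp

lemma card_Lambda_tau_of_set_Int_ball:
  assumes "2 \<le> q" and "q < p"
  shows "q ^ N \<le> card (Lambda p q (tau_of_set q A) \<inter> ball 0 (real p ^ N))"
proof -
  have "lam p q (tau_of_set q A) ` {..<q ^ N} \<subseteq> Lambda p q (tau_of_set q A) \<inter> ball 0 (real p ^ N)"
    using abs_lam_tau_of_set_less[OF assms] by (auto simp: Lambda_def)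
  moreover have "inj_on (lam p q (tau_of_set q A)) {..<q ^ N}"
    using lam_tau_of_set_inj[OF assms] by (rule inj_on_subset) simp
  then have "card (lam p q (tau_of_set q A) ` {..<q ^ N}) = q ^ N"
    by (simp add: card_image)
  ultimately show ?thesis
    using card_mono[OF finite_Lambda_tau_of_set_Int_ball[OF assms(1)]] by metis
qed

lemma upper_beurling_density_pos:
  assumes "0 < c" and "eventually (\<lambda>h. c * h powr r \<le> real (card (\<Lambda> \<inter> ball x h))) at_top"
  shows "0 < upper_beurling_density r \<Lambda>"
proof -
  define f where "f = (\<lambda>h. SUP x::real. ereal (real (card (\<Lambda> \<inter> ball x h)) / h powr r))"
  have "eventually (\<lambda>h. ereal c \<le> f h) at_top"
    using assms(2) eventually_gt_at_top[of 0]
  proof eventually_elim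
    case (elim h)
    then have "c \<le> real (card (\<Lambda> \<inter> ball x h)) / h powr r"
      by (simp add: pos_le_divide_eq)
    also have "ereal \<dots> \<le> f h"
      unfolding f_def by (rule SUP_upper) simp
    finally show ?case by simp
  qed
  then have "ereal c \<le> Liminf at_top f" by (rule Liminf_bounded)
  also have "\<dots> \<le> Limsup at_top f" by (rule Liminf_le_Limsup) simp
  finally have "ereal c \<le> upper_beurling_density r \<Lambda>"
    by (simp add: upper_beurling_density_def f_def)
  with assms(1) show ?thesis
    by (metis ereal_less(2) order.strict_trans2)
qed

lemma power_powr_log_ratio:
  fixes a b :: real
  assumes "1 < b" and "0 < a"
  shows "(b ^ M) powr (ln a / ln b) = a ^ M"
proof -
  have "(b ^ M) powr (ln a / ln b) = (b powr (ln a / ln b)) powr real M"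
    using assms by (simp add: powr_realpow[symmetric] powr_powr mult.commute)
  also have "b powr (ln a / ln b) = a"
    using assms by (simp add: powr_def)
  finally show ?thesis
    using assms by (simp add: powr_realpow)
qed

lemma ex_real_power_ivl:
  fixes h :: real
  assumes "2 \<le> b" and "1 \<le> h"
  obtains N where "real b ^ N \<le> h" and "h < real b ^ (N + 1)"
proof -
  have "1 \<le> nat \<lfloor>h\<rfloor>" using assms(2) by linarith
  then obtain N where N: "b ^ N \<le> nat \<lfloor>h\<rfloor>" "nat \<lfloor>h\<rfloor> < b ^ (N + 1)"
    using ex_power_ivl1[OF assms(1)] by auto
  have "real b ^ N = real (b ^ N)" by simp
  also have "\<dots> \<le> real (nat \<lfloor>h\<rfloor>)" using N(1) by (rule of_nat_mono)
  also have "\<dots> \<le> h" using assms(2) by (simp add: of_nat_floor)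
  finally have lower: "real b ^ N \<le> h" .
  have "h < real (nat \<lfloor>h\<rfloor>) + 1"
    using assms(2) by (simp add: of_nat_nat)
  also have "\<dots> = real (nat \<lfloor>h\<rfloor> + 1)" by simp
  also have "\<dots> \<le> real (b ^ (N + 1))" using N(2) by (intro of_nat_mono) linarith
  also have "\<dots> = real b ^ (N + 1)" by simp
  finally show ?thesis by (rule that[OF lower])
qed

lemma upper_beurling_density_Lambda_tau_of_set:
  assumes "2 \<le> q" and "q < p"
  shows "0 < upper_beurling_density (ln q / ln p) (Lambda p q (tau_of_set q A))"
proof (rule upper_beurling_density_pos)
  let ?s = "ln q / ln p" and ?\<Lambda> = "Lambda p q (tau_of_set q A)"
  show "0 < 1 / real q" using assms by simp
  show "eventually (\<lambda>h. 1 / real q * h powr ?s \<le> real (card (?\<Lambda> \<inter> ball 0 h))) at_top"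
    using eventually_ge_at_top[of "1::real"]
  proof eventually_elim
    case (elim h)
    obtain N where "real p ^ N \<le> h" and "h < real p ^ (N + 1)"
      using ex_real_power_ivl[of p h] elim assms by auto
    have "h powr ?s \<le> real q ^ (N + 1)"
      using powr_mono2[of ?s h "real p ^ (N + 1)"] \<open>h < real p ^ (N + 1)\<close> elim assms
        power_powr_log_ratio[of "real p" "real q" "N + 1"] by simp
    then have "1 / real q * h powr ?s \<le> real (q ^ N)"
      using assms by (simp add: field_simps)
    also have "\<dots> \<le> real (card (?\<Lambda> \<inter> ball 0 (real p ^ N)))"
      using card_Lambda_tau_of_set_Int_ball[OF assms] by simp
    also have "\<dots> \<le> real (card (?\<Lambda> \<inter> ball 0 h))"
      using \<open>real p ^ N \<le> h\<close> finite_Lambda_tau_of_set_Int_ball[OF assms(1)]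
      by (intro of_nat_mono card_mono) auto
    finally show ?case .
  qed
qed

theorem theorem1p6:
  fixes p q :: nat
  assumes "2 \<le> q" and "q < p" and "q dvd p"
  defines "s \<equiv> ln (real q) / ln (real p)"
  shows "uncountable {Lambda p q \<tau> | \<tau>. regular_spectrum_map p q \<tau> \<and>
                        upper_beurling_density s (Lambda p q \<tau>) > 0}"
proof
  \<comment> \<open>\<open>q dvd p\<close> is only needed for \<open>\<Lambda>(\<tau>)\<close> to be a spectrum of \<open>\<mu>\<^sub>p\<^sub>,\<^sub>q\<close>, which is not part of the claim.\<close>
  assume "countable {Lambda p q \<tau> | \<tau>. regular_spectrum_map p q \<tau> \<and>
                        upper_beurling_density s (Lambda p q \<tau>) > 0}"
  moreover have "range (\<lambda>A. Lambda p q (tau_of_set q A)) \<subseteq> {Lambda p q \<tau> | \<tau>.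
      regular_spectrum_map p q \<tau> \<and> upper_beurling_density s (Lambda p q \<tau>) > 0}"
    using regular_spectrum_map_tau_of_set[OF assms(1,2)]
      upper_beurling_density_Lambda_tau_of_set[OF assms(1,2)]
    unfolding s_def by blast
  ultimately have "countable (range (\<lambda>A. Lambda p q (tau_of_set q A)))"
    by (rule countable_subset[rotated])
  then have "countable (UNIV :: nat set set)"
    using Lambda_tau_of_set_inj[OF assms(1,2)] by (rule countable_image_inj_on)
  then show False
    by (metis countable_eqpoll nat_sets_eqpoll_reals eqpoll_sym uncountable_UNIV_real)
qed

end
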